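(* Let $m$ be a positive integer, $M=\{1,\ldots,m\}$, and let $Y\subseteq\mathbb{R}^m$. If the free disposal hull $Y+\mathbb{R}^m_{\geq 0}$ of $Y$ is convex, then the following are equivalent: $(\alpha)$ $\mathrm{WM}\,Y=\mathrm{M}\,Y$; $(\beta)$ $\displaystyle\bigcup_{\emptyset\neq I\subseteq M}\mathrm{M}_I Y\subseteq \mathrm{M}\,Y$.
   Context: Let $M=\{1,\ldots,m\}$. For a nonempty $I\subseteq M$ and $y=(y_1,\ldots,y_m),y'=(y'_1,\ldots,y'_m)\in\mathbb{R}^m$: $y\leq_I y'$ means $y_i\leq y'_i$ for all $i\in I$; $y<_I y'$ means $y_i<y'_i$ for all $i\in I$; $y\lneq_I y'$ means $y_i\leq y'_i$ for all $i\in I$ and $y_j<y'_j$ for some $j\in I$. For $Y\subseteq\mathbb{R}^m$, $\mathrm{M}_I Y$ (resp. $\mathrm{WM}_I Y$) is the set of all $y'\in Y$ for which there is no $y\in Y$ with $y\lneq_I y'$ (resp. $y<_I y'$). Set $\mathrm{M}\,Y=\mathrm{M}_M Y$ (efficient set) and $\mathrm{WM}\,Y=\mathrm{WM}_M Y$ (weakly efficient set). $\mathbb{R}^m_{\geq0}=\{(y_1,\ldots,y_m)\in\mathbb{R}^m: y_i\ge 0\ \forall i\}$, and the free disposal hull of $Z\subseteq\mathbb{R}^m$ is $Z+\mathbb{R}^m_{\geq0}$. *)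

theory Defs
  imports "HOL-Analysis.Analysis"
begin

text \<open>Vectors in R^m are modelled as real ^ 'm, the index set M = {1..m} being UNIV :: 'm set.\<close>

definition le_on :: "'m set \<Rightarrow> real^'m \<Rightarrow> real^'m \<Rightarrow> bool" where
  "le_on I y y' \<longleftrightarrow> (\<forall>i\<in>I. y$i \<le> y'$i)"

definition lt_on :: "'m set \<Rightarrow> real^'m \<Rightarrow> real^'m \<Rightarrow> bool" where
  "lt_on I y y' \<longleftrightarrow> (\<forall>i\<in>I. y$i < y'$i)"

definition lneq_on :: "'m set \<Rightarrow> real^'m \<Rightarrow> real^'m \<Rightarrow> bool" where
  "lneq_on I y y' \<longleftrightarrow> le_on I y y' \<and> (\<exists>j\<in>I. y$j < y'$j)"

definition MI :: "'m set \<Rightarrow> (real^'m) set \<Rightarrow> (real^'m) set" where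
  "MI I Y = {y'\<in>Y. \<not> (\<exists>y\<in>Y. lneq_on I y y')}"

definition WMI :: "'m set \<Rightarrow> (real^'m) set \<Rightarrow> (real^'m) set" where
  "WMI I Y = {y'\<in>Y. \<not> (\<exists>y\<in>Y. lt_on I y y')}"

definition Eff :: "(real^'m) set \<Rightarrow> (real^'m) set" where
  "Eff Y = MI UNIV Y"

definition WEff :: "(real^'m) set \<Rightarrow> (real^'m) set" where
  "WEff Y = WMI UNIV Y"

definition nonneg_orthant :: "(real^'m) set" where
  "nonneg_orthant = {x. \<forall>i. 0 \<le> x$i}"

definition free_disposal_hull :: "(real^'m) set \<Rightarrow> (real^'m) set" where
  "free_disposal_hull Z = {z + d | z d. z \<in> Z \<and> d \<in> nonneg_orthant}"

end

theory Submission
  imports Defs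
begin

text \<open>
  Efficient points and points efficient for a nonempty subset of the criteria are always weakly
  efficient, so only \<open>WEff Y \<subseteq> Eff Y\<close> needs (\<beta>) and convexity. If \<open>y\<close> is weakly efficient, then
  \<open>y\<close> lies outside the open convex set of points strictly dominating some point of the free disposal
  hull. A separating hyperplane gives a nonzero weight vector \<open>a\<close>; since that set is upward closed,
  \<open>a \<ge> 0\<close>, and \<open>y\<close> minimises \<open>\<langle>a, \<cdot>\<rangle>\<close> over \<open>Y\<close>. Such a minimiser is efficient for the criteria in
  the support \<open>I = {i. a$i > 0} \<noteq> {}\<close>, hence efficient by (\<beta>).
\<close>

lemma Eff_subset_WEff: "Eff Y \<subseteq> WEff Y"
  unfolding Eff_def WEff_def MI_def WMI_def lneq_on_def lt_on_def le_on_def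
  by (auto, meson less_imp_le)

lemma WEff_subset: "WEff Y \<subseteq> Y"
  unfolding WEff_def WMI_def by blast

lemma MI_subset_WEff:
  assumes "I \<noteq> {}"
  shows "MI I Y \<subseteq> WEff Y"
  using assms unfolding WEff_def MI_def WMI_def lneq_on_def lt_on_def le_on_def
  by (auto, meson all_not_in_conv less_imp_le)

lemma subset_free_disposal_hull: "Z \<subseteq> free_disposal_hull Z"
proof
  fix z
  assume "z \<in> Z"
  then have "z = z + 0 \<and> z \<in> Z \<and> (0::real^'m) \<in> nonneg_orthant"
    unfolding nonneg_orthant_def by simp
  then show "z \<in> free_disposal_hull Z"
    unfolding free_disposal_hull_def by blast
qed

lemma nonneg_of_forall_pos_add_mult:
  fixes c d :: real
  assumes "\<And>t. t > 0 \<Longrightarrow> 0 \<le> c + t * d"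
  shows "0 \<le> c" and "0 \<le> d"
proof -
  show "0 \<le> d"
  proof (rule ccontr)
    assume "\<not> 0 \<le> d"
    then have "0 \<le> c + ((\<bar>c\<bar> + 1) / - d) * d"
      by (intro assms) (simp add: divide_pos_neg)
    moreover have "((\<bar>c\<bar> + 1) / - d) * d = - (\<bar>c\<bar> + 1)"
      using \<open>\<not> 0 \<le> d\<close> by (simp add: field_simps)
    ultimately show False
      by linarith
  qed
  show "0 \<le> c"
  proof (cases "d = 0")
    case True
    then show ?thesis using assms[of 1] by simp
  next
    case False
    with \<open>0 \<le> d\<close> have "d > 0" by simp
    show ?thesis
    proof (rule field_le_epsilon)
      fix e :: real
      assume "e > 0"
      then have "0 \<le> c + (e / d) * d"
        using \<open>d > 0\<close> by (intro assms) simp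
      then show "0 \<le> c + e"
        using \<open>d > 0\<close> by simp
    qed
  qed
qed

definition strict_upper_set :: "(real^'m) set \<Rightarrow> (real^'m) set" where
  "strict_upper_set Z = {z + d | z d. z \<in> Z \<and> (\<forall>i. 0 < d$i)}"

lemma convex_positive_orthant: "convex {d :: real^'m. \<forall>i. 0 < d$i}"
proof -
  have "{d :: real^'m. \<forall>i. 0 < d$i} = (\<Inter>i. {d. 0 < inner (axis i 1) d})"
    by (auto simp: inner_axis')
  then show ?thesis
    by (simp add: convex_INT convex_halfspace_gt)
qed

lemma convex_strict_upper_set:
  assumes "convex Z"
  shows "convex (strict_upper_set Z)"
proof -
  have "strict_upper_set Z = (\<Union>z\<in>Z. \<Union>d\<in>{d. \<forall>i. 0 < d$i}. {z + d})"
    unfolding strict_upper_set_def by blast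
  then show ?thesis
    using convex_sums[OF assms convex_positive_orthant] by simp
qed

lemma strict_upper_set_add_nonneg:
  assumes "x \<in> strict_upper_set Z" and "\<And>i. 0 \<le> d$i"
  shows "x + d \<in> strict_upper_set Z"
proof -
  from assms(1) obtain z d' where "x = z + d'" "z \<in> Z" "\<forall>i. 0 < d'$i"
    unfolding strict_upper_set_def by blast
  moreover have "\<forall>i. 0 < (d' + d)$i"
    using calculation(3) assms(2) by (simp add: add_pos_nonneg)
  moreover have "x + d = z + (d' + d)"
    using calculation(1) by (simp add: add.assoc)
  ultimately show ?thesis
    unfolding strict_upper_set_def by blast
qed

lemma add_pos_in_strict_upper_set:
  assumes "z \<in> Z" and "e > 0"
  shows "z + e *\<^sub>R 1 \<in> strict_upper_set Z"
proof -
  have "\<forall>i. 0 < (e *\<^sub>R 1 :: real^'m)$i"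
    using assms(2) by simp
  with assms(1) show ?thesis
    unfolding strict_upper_set_def by blast
qed

lemma WEff_not_in_strict_upper_set:
  assumes "y \<in> WEff Y"
  shows "y \<notin> strict_upper_set (free_disposal_hull Y)"
proof
  assume "y \<in> strict_upper_set (free_disposal_hull Y)"
  then obtain y' d d' where "y = (y' + d') + d" "y' \<in> Y" "\<forall>i. 0 \<le> d'$i" "\<forall>i. 0 < d$i"
    unfolding strict_upper_set_def free_disposal_hull_def nonneg_orthant_def by blast
  then have "lt_on UNIV y' y"
    unfolding lt_on_def by (simp add: add_nonneg_pos)
  with \<open>y' \<in> Y\<close> assms show False
    unfolding WEff_def WMI_def by blast
qed

lemma WEff_minimises_nonneg_weighting:
  assumes "convex (free_disposal_hull Y)" and "y \<in> WEff Y"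
  obtains a :: "real^'m" where "a \<noteq> 0" "\<And>i. 0 \<le> a$i" "\<And>y'. y' \<in> Y \<Longrightarrow> inner a y \<le> inner a y'"
proof -
  let ?U = "strict_upper_set (free_disposal_hull Y)"
  have "convex ((\<lambda>x. x - y) ` ?U)"
    using convex_strict_upper_set[OF assms(1)] by simp
  moreover have "0 \<notin> (\<lambda>x. x - y) ` ?U"
    using WEff_not_in_strict_upper_set[OF assms(2)] by auto
  ultimately obtain a where "a \<noteq> 0" and sep_0: "\<forall>x\<in>(\<lambda>x. x - y) ` ?U. 0 \<le> inner a x"
    using separating_hyperplane_set_0 by blast
  have sep: "inner a y \<le> inner a x" if "x \<in> ?U" for x
    using sep_0 that by (simp add: inner_diff_right)
  have upper: "z + e *\<^sub>R 1 \<in> ?U" if "z \<in> Y" "e > 0" for z e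
    using that subset_free_disposal_hull by (blast intro: add_pos_in_strict_upper_set)
  have "y \<in> Y"
    using assms(2) WEff_subset by blast
  have "0 \<le> a$i" for i
  proof (rule nonneg_of_forall_pos_add_mult(2))
    fix t :: real
    assume "t > 0"
    have "y + 1 *\<^sub>R 1 + t *\<^sub>R axis i 1 \<in> ?U"
      using \<open>t > 0\<close> by (intro strict_upper_set_add_nonneg upper \<open>y \<in> Y\<close>) (auto simp: axis_def)
    from sep[OF this] show "0 \<le> inner a 1 + t * a$i"
      by (simp add: inner_add_right inner_axis)
  qed
  moreover have "inner a y \<le> inner a y'" if "y' \<in> Y" for y'
  proof -
    have "0 \<le> inner a (y' - y)"
    proof (rule nonneg_of_forall_pos_add_mult(1))
      fix e :: real
      assume "e > 0"
      from sep[OF upper[OF that this]] show "0 \<le> inner a (y' - y) + e * inner a 1"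
        by (simp add: inner_add_right inner_diff_right)
    qed
    then show ?thesis
      by (simp add: inner_diff_right)
  qed
  ultimately show ?thesis
    using \<open>a \<noteq> 0\<close> that by blast
qed

lemma inner_less_if_lneq_on_support:
  fixes a :: "real^'m"
  assumes "\<And>i. 0 \<le> a$i" and "lneq_on {i. 0 < a$i} y' y"
  shows "inner a y' < inner a y"
proof -
  from assms(2) obtain j where le: "\<And>i. 0 < a$i \<Longrightarrow> y'$i \<le> y$i" and "0 < a$j" "y'$j < y$j"
    unfolding lneq_on_def le_on_def by auto
  have "a$i * (y' - y)$i \<le> 0" for i
  proof (cases "0 < a$i")
    case True
    then show ?thesis
      using le[OF True] by (simp add: mult_nonneg_nonpos)
  next
    case False
    then have "a$i = 0"
      using assms(1)[of i] by simp
    then show ?thesis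
      by simp
  qed
  moreover have "a$j * (y' - y)$j < 0"
    using \<open>0 < a$j\<close> \<open>y'$j < y$j\<close> by (simp add: mult_pos_neg)
  ultimately have "(\<Sum>i\<in>UNIV. a$i * (y' - y)$i) < (\<Sum>i\<in>(UNIV::'m set). 0)"
    by (intro sum_strict_mono_ex1) auto
  then have "inner a (y' - y) < 0"
    by (simp add: inner_vec_def)
  then show ?thesis
    by (simp add: inner_diff_right)
qed

lemma minimiser_in_MI_support:
  fixes a :: "real^'m"
  assumes "\<And>i. 0 \<le> a$i" and "y \<in> Y" and min: "\<And>y'. y' \<in> Y \<Longrightarrow> inner a y \<le> inner a y'"
  shows "y \<in> MI {i. 0 < a$i} Y"
  unfolding MI_def
proof (intro CollectI conjI assms(2) notI)
  assume "\<exists>y'\<in>Y. lneq_on {i. 0 < a$i} y' y"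
  then obtain y' where "y' \<in> Y" "lneq_on {i. 0 < a$i} y' y"
    by blast
  with inner_less_if_lneq_on_support[OF assms(1)] min show False
    by (meson not_less)
qed

lemma nonneg_nonzero_vec_has_pos_component:
  fixes a :: "real^'m"
  assumes "\<And>i. 0 \<le> a$i" and "a \<noteq> 0"
  shows "{i. 0 < a$i} \<noteq> {}"
proof
  assume "{i. 0 < a$i} = {}"
  then have "a$i = 0" for i
    using assms(1)[of i] by (metis empty_Collect_eq order_neq_le_trans)
  with assms(2) show False
    by (simp add: vec_eq_iff)
qed

theorem theorem2p1:
  fixes Y :: "(real^'m) set"
  assumes "convex (free_disposal_hull Y)"
  shows "WEff Y = Eff Y \<longleftrightarrow> (\<Union>I\<in>{I. I \<noteq> {}}. MI I Y) \<subseteq> Eff Y"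
proof
  assume "WEff Y = Eff Y"
  then show "(\<Union>I\<in>{I. I \<noteq> {}}. MI I Y) \<subseteq> Eff Y"
    using MI_subset_WEff by blast
next
  assume beta: "(\<Union>I\<in>{I. I \<noteq> {}}. MI I Y) \<subseteq> Eff Y"
  have "WEff Y \<subseteq> Eff Y"
  proof
    fix y
    assume "y \<in> WEff Y"
    obtain a :: "real^'m" where a: "a \<noteq> 0" "\<And>i. 0 \<le> a$i"
      and min: "\<And>y'. y' \<in> Y \<Longrightarrow> inner a y \<le> inner a y'"
      using WEff_minimises_nonneg_weighting[OF assms \<open>y \<in> WEff Y\<close>] by blast
    have "y \<in> Y"
      using \<open>y \<in> WEff Y\<close> WEff_subset by blast
    then have "y \<in> MI {i. 0 < a$i} Y"
      by (rule minimiser_in_MI_support[OF a(2) _ min])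
    moreover have "{i. 0 < a$i} \<noteq> {}"
      by (rule nonneg_nonzero_vec_has_pos_component[OF a(2,1)])
    ultimately show "y \<in> Eff Y"
      using beta unfolding UN_subset_iff by blast
  qed
  then show "WEff Y = Eff Y"
    using Eff_subset_WEff by blast
qed

end
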